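(* Let $B$ and $C$ be groups with $C$ abelian, and let $\phi: C\to \mathrm{Aut}(B)$, $c\mapsto\phi_c$, and $\psi: B\to\mathrm{Aut}(C)$, $b\mapsto\psi_b$, be homomorphisms such that $\phi_{\psi_b(c)} = \phi_c$ for all $b\in B$, $c\in C$. On $A = B\times C$ define \[ (b_1,c_1)\cdot(b_2,c_2) = (b_1\phi_{c_1}(b_2),\, c_1c_2),\qquad (b_1,c_1)\circ(b_2,c_2) = (b_1b_2,\, c_1\psi_{b_1}(c_2)). \] Then $(A,\cdot,\circ)$ is a skew brace, i.e. $a_1\circ(a_2\cdot a_3) = (a_1\circ a_2)\cdot a_1^{-1}\cdot(a_1\circ a_3)$ for all $a_1,a_2,a_3\in A$, where $a_1^{-1}$ is the inverse in $(A,\cdot)$.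
   Context: A skew brace is a set $A$ with two group operations $\cdot$ and $\circ$ such that $a\circ(b\cdot c) = (a\circ b)\cdot a^{-1}\cdot (a\circ c)$ for all $a,b,c\in A$. Note $(A,\cdot)=B\rtimes_\phi C$ and $(A,\circ)=B\ltimes_\psi C$ are groups. *)

theory Defs
  imports "HOL-Algebra.Algebra"
begin

definition sdp_dot ::
  "('b, 'x) monoid_scheme \<Rightarrow> ('c, 'y) monoid_scheme \<Rightarrow> ('c \<Rightarrow> 'b \<Rightarrow> 'b) \<Rightarrow> ('b \<times> 'c) monoid"
  where "sdp_dot B C phi =
    \<lparr>carrier = carrier B \<times> carrier C,
     monoid.mult = (\<lambda>(b1, c1) (b2, c2). (b1 \<otimes>\<^bsub>B\<^esub> phi c1 b2, c1 \<otimes>\<^bsub>C\<^esub> c2)),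
     monoid.one = (\<one>\<^bsub>B\<^esub>, \<one>\<^bsub>C\<^esub>)\<rparr>"

definition sdp_circ ::
  "('b, 'x) monoid_scheme \<Rightarrow> ('c, 'y) monoid_scheme \<Rightarrow> ('b \<Rightarrow> 'c \<Rightarrow> 'c) \<Rightarrow> ('b \<times> 'c) monoid"
  where "sdp_circ B C psi =
    \<lparr>carrier = carrier B \<times> carrier C,
     monoid.mult = (\<lambda>(b1, c1) (b2, c2). (b1 \<otimes>\<^bsub>B\<^esub> b2, c1 \<otimes>\<^bsub>C\<^esub> psi b1 c2)),
     monoid.one = (\<one>\<^bsub>B\<^esub>, \<one>\<^bsub>C\<^esub>)\<rparr>"

definition skew_brace :: "('a, 'x) monoid_scheme \<Rightarrow> ('a, 'y) monoid_scheme \<Rightarrow> bool"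
  where "skew_brace D E \<longleftrightarrow> group D \<and> group E \<and> carrier D = carrier E \<and>
    (\<forall>a\<in>carrier D. \<forall>b\<in>carrier D. \<forall>c\<in>carrier D.
       a \<otimes>\<^bsub>E\<^esub> (b \<otimes>\<^bsub>D\<^esub> c)
       = (a \<otimes>\<^bsub>E\<^esub> b) \<otimes>\<^bsub>D\<^esub> inv\<^bsub>D\<^esub> a \<otimes>\<^bsub>D\<^esub> (a \<otimes>\<^bsub>E\<^esub> c))"

end

theory Submission
  imports Defs
begin

(* Write a_i = (b_i, c_i). Since C is abelian, conjugation by c1 is trivial, so the C-coordinate
   of (a1 o a2) . a1^-1 is psi_b1(c2); the compatibility phi_(psi_b(c)) = phi_c then makes its
   B-coordinate b1 b2 phi_c2(b1^-1). Multiplying by a1 o a3 = (b1 b3, c1 psi_b1(c3)), the factor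
   phi_c2(b1^-1) cancels against phi_c2(b1), leaving a1 o (a2 . a3) = (b1 b2 phi_c2(b3), c1 psi_b1(c2 c3)). *)

lemma AutoGroup_hom_apply_group_hom:
  assumes "group G" and "f \<in> hom H (AutoGroup G)" and "c \<in> carrier H"
  shows "group_hom G G (f c)"
proof -
  have "f c \<in> hom G G"
    using assms(2,3) by (auto simp: hom_def AutoGroup_def BijGroup_def auto_def)
  then show ?thesis
    using assms(1) by (simp add: group_hom_def group_hom_axioms_def)
qed

lemma AutoGroup_hom_apply_mult_action:
  assumes "f \<in> hom H (AutoGroup G)"
    and "c \<in> carrier H" and "d \<in> carrier H" and "x \<in> carrier G"
  shows "f (c \<otimes>\<^bsub>H\<^esub> d) x = f c (f d x)"
proof -
  have "f (c \<otimes>\<^bsub>H\<^esub> d) = f c \<otimes>\<^bsub>AutoGroup G\<^esub> f d"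
    using assms(1-3) by (simp add: hom_def)
  moreover have "f c \<in> auto G" "f d \<in> auto G"
    using assms(1-3) by (auto simp: hom_def AutoGroup_def BijGroup_def)
  ultimately show ?thesis
    using assms(4) by (simp add: AutoGroup_def BijGroup_def auto_def compose_def)
qed

lemma AutoGroup_hom_apply_one_action:
  assumes "group G" and "group H" and "f \<in> hom H (AutoGroup G)" and "x \<in> carrier G"
  shows "f \<one>\<^bsub>H\<^esub> x = x"
proof -
  interpret group_hom H "AutoGroup G" f
    using assms(1-3) by (simp add: group_hom_def group_hom_axioms_def group.AutoGroup)
  have "f \<one>\<^bsub>H\<^esub> = \<one>\<^bsub>AutoGroup G\<^esub>" by simp
  then show ?thesis
    using assms(4) by (simp add: AutoGroup_def BijGroup_def)
qed

lemma group_sdp_dot: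
  assumes B: "group B" and C: "group C" and phi: "phi \<in> hom C (AutoGroup B)"
  shows "group (sdp_dot B C phi)"
proof -
  interpret B: group B by (fact B)
  interpret C: group C by (fact C)
  have phi_hom: "\<And>c. c \<in> carrier C \<Longrightarrow> group_hom B B (phi c)"
    using AutoGroup_hom_apply_group_hom[OF B phi] .
  note phi_closed = group_hom.hom_closed[OF phi_hom]
  note phi_mult = group_hom.hom_mult[OF phi_hom]
  note phi_action = AutoGroup_hom_apply_mult_action[OF phi]
  show ?thesis
  proof (rule groupI)
    fix x assume "x \<in> carrier (sdp_dot B C phi)"
    then obtain b c where x: "x = (b, c)" "b \<in> carrier B" "c \<in> carrier C"
      by (auto simp: sdp_dot_def)
    have "phi (inv\<^bsub>C\<^esub> c) (inv\<^bsub>B\<^esub> b) \<otimes>\<^bsub>B\<^esub> phi (inv\<^bsub>C\<^esub> c) b = \<one>\<^bsub>B\<^esub>"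
      using x phi_hom by (simp add: phi_mult[symmetric] group_hom.hom_one)
    then show "\<exists>y\<in>carrier (sdp_dot B C phi). y \<otimes>\<^bsub>sdp_dot B C phi\<^esub> x = \<one>\<^bsub>sdp_dot B C phi\<^esub>"
      using x
      by (intro bexI[of _ "(phi (inv\<^bsub>C\<^esub> c) (inv\<^bsub>B\<^esub> b), inv\<^bsub>C\<^esub> c)"])
         (auto simp: sdp_dot_def phi_closed)
  qed (auto simp: sdp_dot_def phi_closed phi_mult phi_action B.m_assoc C.m_assoc
         AutoGroup_hom_apply_one_action[OF B C phi])
qed

lemma group_sdp_circ:
  assumes B: "group B" and C: "group C" and psi: "psi \<in> hom B (AutoGroup C)"
  shows "group (sdp_circ B C psi)"
proof -
  interpret B: group B by (fact B)
  interpret C: group C by (fact C)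
  have psi_hom: "\<And>b. b \<in> carrier B \<Longrightarrow> group_hom C C (psi b)"
    using AutoGroup_hom_apply_group_hom[OF C psi] .
  note psi_closed = group_hom.hom_closed[OF psi_hom]
  note psi_mult = group_hom.hom_mult[OF psi_hom]
  note psi_action = AutoGroup_hom_apply_mult_action[OF psi]
  show ?thesis
  proof (rule groupI)
    fix x assume "x \<in> carrier (sdp_circ B C psi)"
    then obtain b c where x: "x = (b, c)" "b \<in> carrier B" "c \<in> carrier C"
      by (auto simp: sdp_circ_def)
    have "psi (inv\<^bsub>B\<^esub> b) (inv\<^bsub>C\<^esub> c) \<otimes>\<^bsub>C\<^esub> psi (inv\<^bsub>B\<^esub> b) c = \<one>\<^bsub>C\<^esub>"
      using x psi_hom by (simp add: psi_mult[symmetric] group_hom.hom_one)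
    then show "\<exists>y\<in>carrier (sdp_circ B C psi). y \<otimes>\<^bsub>sdp_circ B C psi\<^esub> x = \<one>\<^bsub>sdp_circ B C psi\<^esub>"
      using x
      by (intro bexI[of _ "(inv\<^bsub>B\<^esub> b, psi (inv\<^bsub>B\<^esub> b) (inv\<^bsub>C\<^esub> c))"])
         (auto simp: sdp_circ_def psi_closed)
  qed (auto simp: sdp_circ_def psi_closed psi_mult psi_action B.m_assoc C.m_assoc
         AutoGroup_hom_apply_one_action[OF C B psi])
qed

lemma inv_sdp_dot:
  assumes B: "group B" and C: "group C" and phi: "phi \<in> hom C (AutoGroup B)"
    and b: "b \<in> carrier B" and c: "c \<in> carrier C"
  shows "inv\<^bsub>sdp_dot B C phi\<^esub> (b, c) = (phi (inv\<^bsub>C\<^esub> c) (inv\<^bsub>B\<^esub> b), inv\<^bsub>C\<^esub> c)"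
proof -
  interpret B: group B by (fact B)
  interpret C: group C by (fact C)
  interpret phi_c: group_hom B B "phi (inv\<^bsub>C\<^esub> c)"
    using AutoGroup_hom_apply_group_hom[OF B phi] c by simp
  have "phi (inv\<^bsub>C\<^esub> c) (inv\<^bsub>B\<^esub> b) \<otimes>\<^bsub>B\<^esub> phi (inv\<^bsub>C\<^esub> c) b = \<one>\<^bsub>B\<^esub>"
    using b by (simp flip: phi_c.hom_mult)
  then show ?thesis
    using b c
    by (intro group.inv_equality[OF group_sdp_dot[OF B C phi]])
       (auto simp: sdp_dot_def)
qed

lemma sdp_circ_sdp_dot_brace_law:
  assumes B: "group B" and C: "comm_group C"
    and phi: "phi \<in> hom C (AutoGroup B)" and psi: "psi \<in> hom B (AutoGroup C)"
    and phi_psi: "\<And>b c. b \<in> carrier B \<Longrightarrow> c \<in> carrier C \<Longrightarrow> phi (psi b c) = phi c"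
    and b1: "b1 \<in> carrier B" and c1: "c1 \<in> carrier C"
    and b2: "b2 \<in> carrier B" and c2: "c2 \<in> carrier C"
    and b3: "b3 \<in> carrier B" and c3: "c3 \<in> carrier C"
  shows "(b1, c1) \<otimes>\<^bsub>sdp_circ B C psi\<^esub> ((b2, c2) \<otimes>\<^bsub>sdp_dot B C phi\<^esub> (b3, c3))
    = (b1, c1) \<otimes>\<^bsub>sdp_circ B C psi\<^esub> (b2, c2) \<otimes>\<^bsub>sdp_dot B C phi\<^esub> inv\<^bsub>sdp_dot B C phi\<^esub> (b1, c1)
        \<otimes>\<^bsub>sdp_dot B C phi\<^esub> ((b1, c1) \<otimes>\<^bsub>sdp_circ B C psi\<^esub> (b3, c3))"
proof -
  interpret B: group B by (fact B)
  interpret C: comm_group C by (fact C)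
  interpret psi_b1: group_hom C C "psi b1"
    by (rule AutoGroup_hom_apply_group_hom[OF C.is_group psi b1])
  interpret phi_c2: group_hom B B "phi c2"
    by (rule AutoGroup_hom_apply_group_hom[OF B phi c2])
  have phi_closed: "\<And>c x. c \<in> carrier C \<Longrightarrow> x \<in> carrier B \<Longrightarrow> phi c x \<in> carrier B"
    by (rule group_hom.hom_closed[OF AutoGroup_hom_apply_group_hom[OF B phi]])
  note phi_action = AutoGroup_hom_apply_mult_action[OF phi]
  have conj_trivial: "c1 \<otimes>\<^bsub>C\<^esub> psi b1 c2 \<otimes>\<^bsub>C\<^esub> inv\<^bsub>C\<^esub> c1 = psi b1 c2"
    using b1 c1 c2 by (simp add: C.m_comm[of c1] C.m_assoc)
  have twisted_inv: "phi (c1 \<otimes>\<^bsub>C\<^esub> psi b1 c2) (phi (inv\<^bsub>C\<^esub> c1) (inv\<^bsub>B\<^esub> b1))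
      = phi c2 (inv\<^bsub>B\<^esub> b1)"
    using b1 c1 c2 conj_trivial phi_psi
    by (simp flip: phi_action add: C.m_assoc)
  have circ_dot_inv: "(b1, c1) \<otimes>\<^bsub>sdp_circ B C psi\<^esub> (b2, c2)
        \<otimes>\<^bsub>sdp_dot B C phi\<^esub> inv\<^bsub>sdp_dot B C phi\<^esub> (b1, c1)
      = (b1 \<otimes>\<^bsub>B\<^esub> b2 \<otimes>\<^bsub>B\<^esub> phi c2 (inv\<^bsub>B\<^esub> b1), psi b1 c2)"
    unfolding inv_sdp_dot[OF B C.is_group phi b1 c1]
    using b1 c1 c2 conj_trivial twisted_inv by (simp add: sdp_dot_def sdp_circ_def)
  have cancel: "phi c2 (inv\<^bsub>B\<^esub> b1) \<otimes>\<^bsub>B\<^esub> phi (psi b1 c2) (b1 \<otimes>\<^bsub>B\<^esub> b3) = phi c2 b3"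
    using b1 b3 c2 phi_psi by (simp flip: B.m_assoc)
  have "(b1, c1) \<otimes>\<^bsub>sdp_circ B C psi\<^esub> (b2, c2) \<otimes>\<^bsub>sdp_dot B C phi\<^esub> inv\<^bsub>sdp_dot B C phi\<^esub> (b1, c1)
        \<otimes>\<^bsub>sdp_dot B C phi\<^esub> ((b1, c1) \<otimes>\<^bsub>sdp_circ B C psi\<^esub> (b3, c3))
      = (b1 \<otimes>\<^bsub>B\<^esub> b2 \<otimes>\<^bsub>B\<^esub> phi c2 (inv\<^bsub>B\<^esub> b1), psi b1 c2)
        \<otimes>\<^bsub>sdp_dot B C phi\<^esub> (b1 \<otimes>\<^bsub>B\<^esub> b3, c1 \<otimes>\<^bsub>C\<^esub> psi b1 c3)"
    unfolding circ_dot_inv by (simp add: sdp_circ_def)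
  also have "\<dots> = (b1 \<otimes>\<^bsub>B\<^esub> (b2 \<otimes>\<^bsub>B\<^esub> phi c2 b3), c1 \<otimes>\<^bsub>C\<^esub> psi b1 (c2 \<otimes>\<^bsub>C\<^esub> c3))"
    using b1 b2 b3 c1 c2 c3 cancel
    by (simp add: sdp_dot_def phi_closed B.m_assoc C.m_lcomm)
  also have "\<dots> = (b1, c1) \<otimes>\<^bsub>sdp_circ B C psi\<^esub> ((b2, c2) \<otimes>\<^bsub>sdp_dot B C phi\<^esub> (b3, c3))"
    by (simp add: sdp_dot_def sdp_circ_def)
  finally show ?thesis by (rule sym)
qed

theorem lemma8p1:
  fixes B :: "('b, 'x) monoid_scheme" and C :: "('c, 'y) monoid_scheme"
    and phi :: "'c \<Rightarrow> 'b \<Rightarrow> 'b" and psi :: "'b \<Rightarrow> 'c \<Rightarrow> 'c"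
  assumes "group B" and "comm_group C"
    and "phi \<in> hom C (AutoGroup B)"
    and "psi \<in> hom B (AutoGroup C)"
    and "\<And>b c. b \<in> carrier B \<Longrightarrow> c \<in> carrier C \<Longrightarrow> phi (psi b c) = phi c"
  shows "skew_brace (sdp_dot B C phi) (sdp_circ B C psi)"
proof -
  have C: "group C"
    using assms(2) by (rule comm_group.axioms(2))
  have "group (sdp_dot B C phi)" "group (sdp_circ B C psi)"
    using group_sdp_dot[OF assms(1) C assms(3)] group_sdp_circ[OF assms(1) C assms(4)] .
  moreover have carrier_dot: "carrier (sdp_dot B C phi) = carrier B \<times> carrier C"
    by (simp add: sdp_dot_def)
  moreover have "carrier (sdp_circ B C psi) = carrier B \<times> carrier C"
    by (simp add: sdp_circ_def)
  moreover have "a1 \<otimes>\<^bsub>sdp_circ B C psi\<^esub> (a2 \<otimes>\<^bsub>sdp_dot B C phi\<^esub> a3)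
      = a1 \<otimes>\<^bsub>sdp_circ B C psi\<^esub> a2 \<otimes>\<^bsub>sdp_dot B C phi\<^esub> inv\<^bsub>sdp_dot B C phi\<^esub> a1
          \<otimes>\<^bsub>sdp_dot B C phi\<^esub> (a1 \<otimes>\<^bsub>sdp_circ B C psi\<^esub> a3)"
    if a: "a1 \<in> carrier (sdp_dot B C phi)" "a2 \<in> carrier (sdp_dot B C phi)"
      "a3 \<in> carrier (sdp_dot B C phi)" for a1 a2 a3
  proof -
    obtain b1 c1 b2 c2 b3 c3 where "a1 = (b1, c1)" "a2 = (b2, c2)" "a3 = (b3, c3)"
      and "b1 \<in> carrier B" "c1 \<in> carrier C" "b2 \<in> carrier B" "c2 \<in> carrier C"
        "b3 \<in> carrier B" "c3 \<in> carrier C"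
      using a unfolding carrier_dot by blast
    \<comment> \<open>the explicit \<open>of\<close> avoids a higher-order unification blow-up in \<open>OF assms\<close>\<close>
    then show ?thesis
      by (simp add: sdp_circ_sdp_dot_brace_law[of B C phi psi, OF assms])
  qed
  ultimately show ?thesis
    unfolding skew_brace_def by simp
qed

end
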